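(* Let $(G,w)$ be a weighted trigraph, let $C$ be a clique-cutset of $G$, and let $(A,B,C)$ be a cut-partition of $G$. Set $G_A=G[A\cup C]$, $G_B=G[B\cup C]$, and for every $C'\subseteq C$ set $\alpha_{A\cup C'}=\alpha(\mathrm{Red}[G_A,w;A\cup C'])+\mathrm{Ext}[G_A,w;A\cup C']$. Define $w_B:D(G_B)\to\mathbb N$ by $w_B(c)=\alpha_{A\cup\{c\}}-\alpha_A$ for $c\in C$, and $w_B(p)=w(p)$ for all $p\in D(G_B)\setminus C$. Then $w_B$ is a weight function for $G_B$ (in particular each $w_B(c)\ge 0$), and $\alpha(G,w)=\alpha_A+\alpha(G_B,w_B)$.
   Context: A trigraph $G$ consists of a finite vertex set $V(G)$ and an adjacency function $\theta_G:\binom{V(G)}{2}\to\{-1,0,1\}$; for distinct $u,v$ write $uv$ for $\{u,v\}$. The pair $uv$ is strongly adjacent if $\theta_G(uv)=1$, semi-adjacent if $\theta_G(uv)=0$, strongly anti-adjacent if $\theta_G(uv)=-1$; $u,v$ are anti-adjacent if $\theta_G(uv)\le 0$. A stable set is a set of pairwise anti-adjacent vertices; a strong clique is a set of pairwise strongly adjacent vertices. For $X\subseteq V(G)$, $G[X]$ is the trigraph on $X$ with the restricted adjacency function, and $G\setminus X=G[V(G)\setminus X]$. $G$ is connected if the graph on $V(G)$ whose edges are the pairs $uv$ with $\theta_G(uv)\ge 0$ is connected. A clique-cutset is a (possibly empty) strong clique $C$ such that $G\setminus C$ is disconnected. A cut-partition of $G$ is a partition $(A,B,C)$ of $V(G)$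 with $A,B$ non-empty ($C$ possibly empty) such that every vertex of $A$ is strongly anti-adjacent to every vertex of $B$. $\mathbb N$ denotes the non-negative integers. For a trigraph $G$ let $D(G)=V(G)\cup\{(u,v):u,v\in V(G),u\neq v\}\cup\binom{V(G)}{2}$. A weight function for $G$ is a map $w:D(G)\to\mathbb N$ such that for all distinct $u,v$: if $uv$ is not semi-adjacent then $w(u,v)=w(v,u)=w(uv)=0$, and $w(u,v)\le w(uv)$. A weighted trigraph is a pair $(G,w)$ with $w$ a weight function for $G$; for $X\subseteq V(G)$, $(G[X],w)$ denotes $(G[X],w|_{D(G[X])})$. The weight of $S\subseteq V(G)$ is $\llbracket S\rrbracket_{(G,w)}=\sum_{u\in S}w(u)+\sum_{u\in S}\sum_{v\in V(G)\setminus S}w(u,v)+\sum_{uv\in\binom{V(G)\setminus S}{2}}w(uv)$, and $\alpha(G,w)=\max\{\llbracket S\rrbracket_{(G,w)}: S \text{ a stable set of } G\}$. For $R\subseteq V(G)$, the reduction $\mathrm{Red}[G,w;R]$ is the weighted trigraph $(G[R],w')$ where $w'(u)=\max\{w(u)-\sum_{v\in V(G)\setminus R}(w(uv)-w(u,v)),0\}$ for $u\in R$, and $w'(u,v)=w(u,v)$, $w'(uv)=w(uv)$ for distinct $u,v\in R$. The exterior weight is $\mathrm{Ext}[G,w;R]=\sum_{uv\in\binom{V(G)\setminus R}{2}}w(uv)+\sum_{u\in R}\sum_{v\in V(G)\setminus R}w(uv)$. *)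

theory Defs
  imports Main
begin

text \<open>A trigraph is a finite vertex set together with an adjacency function on
  2-element subsets (unordered pairs). Values of the function on sets that are
  not 2-subsets of the vertex set are irrelevant.\<close>
type_synonym 'a trigraph = "'a set \<times> ('a set \<Rightarrow> int)"

definition verts :: "'a trigraph \<Rightarrow> 'a set" where "verts G = fst G"
definition theta :: "'a trigraph \<Rightarrow> 'a \<Rightarrow> 'a \<Rightarrow> int" where
  "theta G u v = snd G {u, v}"

definition trigraph :: "'a trigraph \<Rightarrow> bool" where
  "trigraph G \<longleftrightarrow> finite (verts G) \<and>
     (\<forall>u\<in>verts G. \<forall>v\<in>verts G. u \<noteq> v \<longrightarrow> theta G u v \<in> {-1, 0, 1})"

definition induced :: "'a trigraph \<Rightarrow> 'a set \<Rightarrow> 'a trigraph" where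
  "induced G X = (X \<inter> verts G, snd G)"

definition delete :: "'a trigraph \<Rightarrow> 'a set \<Rightarrow> 'a trigraph" where
  "delete G X = induced G (verts G - X)"

definition stable_set :: "'a trigraph \<Rightarrow> 'a set \<Rightarrow> bool" where
  "stable_set G S \<longleftrightarrow> S \<subseteq> verts G \<and> (\<forall>u\<in>S. \<forall>v\<in>S. u \<noteq> v \<longrightarrow> theta G u v \<le> 0)"

definition strong_clique :: "'a trigraph \<Rightarrow> 'a set \<Rightarrow> bool" where
  "strong_clique G S \<longleftrightarrow> S \<subseteq> verts G \<and> (\<forall>u\<in>S. \<forall>v\<in>S. u \<noteq> v \<longrightarrow> theta G u v = 1)"

definition edge_rel :: "'a trigraph \<Rightarrow> ('a \<times> 'a) set" where
  "edge_rel G = {(u, v). u \<in> verts G \<and> v \<in> verts G \<and> u \<noteq> v \<and> theta G u v \<ge> 0}"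

definition connected_tg :: "'a trigraph \<Rightarrow> bool" where
  "connected_tg G \<longleftrightarrow> (\<forall>u\<in>verts G. \<forall>v\<in>verts G. (u, v) \<in> (edge_rel G)\<^sup>*)"

definition clique_cutset :: "'a trigraph \<Rightarrow> 'a set \<Rightarrow> bool" where
  "clique_cutset G C \<longleftrightarrow> strong_clique G C \<and> \<not> connected_tg (delete G C)"

definition cut_partition :: "'a trigraph \<Rightarrow> 'a set \<Rightarrow> 'a set \<Rightarrow> 'a set \<Rightarrow> bool" where
  "cut_partition G A B C \<longleftrightarrow>
     A \<union> B \<union> C = verts G \<and> A \<inter> B = {} \<and> A \<inter> C = {} \<and> B \<inter> C = {} \<and>
     A \<noteq> {} \<and> B \<noteq> {} \<and> (\<forall>a\<in>A. \<forall>b\<in>B. theta G a b = -1)"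

text \<open>Elements of D(G): vertices, ordered pairs, unordered pairs (2-element sets).\<close>
datatype 'a delem = Vtx 'a | Ord 'a 'a | Unord "'a set"

definition weight_function :: "'a trigraph \<Rightarrow> ('a delem \<Rightarrow> nat) \<Rightarrow> bool" where
  "weight_function G w \<longleftrightarrow>
     (\<forall>u\<in>verts G. \<forall>v\<in>verts G. u \<noteq> v \<longrightarrow>
        (theta G u v \<noteq> 0 \<longrightarrow> w (Ord u v) = 0 \<and> w (Ord v u) = 0 \<and> w (Unord {u, v}) = 0) \<and>
        w (Ord u v) \<le> w (Unord {u, v}))"

definition pairs2 :: "'a set \<Rightarrow> 'a set set" where
  "pairs2 X = {p. p \<subseteq> X \<and> card p = 2}"

definition set_weight :: "'a trigraph \<Rightarrow> ('a delem \<Rightarrow> nat) \<Rightarrow> 'a set \<Rightarrow> nat" where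
  "set_weight G w S =
     (\<Sum>u\<in>S. w (Vtx u)) + (\<Sum>u\<in>S. \<Sum>v\<in>verts G - S. w (Ord u v))
     + (\<Sum>p\<in>pairs2 (verts G - S). w (Unord p))"

definition alpha :: "'a trigraph \<Rightarrow> ('a delem \<Rightarrow> nat) \<Rightarrow> nat" where
  "alpha G w = Max (set_weight G w ` {S. stable_set G S})"

definition red_weight :: "'a trigraph \<Rightarrow> ('a delem \<Rightarrow> nat) \<Rightarrow> 'a set \<Rightarrow> 'a delem \<Rightarrow> nat" where
  "red_weight G w R p = (case p of
      Vtx u \<Rightarrow> nat (max (int (w (Vtx u)) -
                 (\<Sum>v\<in>verts G - R. int (w (Unord {u, v})) - int (w (Ord u v)))) 0)
    | _ \<Rightarrow> w p)"

definition Red :: "'a trigraph \<Rightarrow> ('a delem \<Rightarrow> nat) \<Rightarrow> 'a set \<Rightarrow> 'a trigraph \<times> ('a delem \<Rightarrow> nat)" where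
  "Red G w R = (induced G R, red_weight G w R)"

definition Ext :: "'a trigraph \<Rightarrow> ('a delem \<Rightarrow> nat) \<Rightarrow> 'a set \<Rightarrow> nat" where
  "Ext G w R = (\<Sum>p\<in>pairs2 (verts G - R). w (Unord p))
               + (\<Sum>u\<in>R. \<Sum>v\<in>verts G - R. w (Unord {u, v}))"

definition alpha_wt :: "'a trigraph \<times> ('a delem \<Rightarrow> nat) \<Rightarrow> nat" where
  "alpha_wt X = alpha (fst X) (snd X)"

end

(* For a weighted trigraph (H, w) and a set R of vertices, the weight of a stable set T inside R
   in Red[H,w;R], plus Ext[H,w;R], is its weight in (H, w) plus the amounts by which vertex
   weights of T were clipped at 0.  A clipped vertex can be dropped from T without loss, so
   \<alpha>(Red[H,w;R]) + Ext[H,w;R] is the largest weight in (H, w) of a stable set inside R.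

   No weight sits on pairs between A and B, nor on pairs inside the strong clique C; hence
   for a stable set S of G
     [[S]]_(G,w) + \<Sum>(c \<in> S \<inter> C) w_B(c) = [[S \<inter> (A \<union> C)]]_(G_A,w) + [[S \<inter> (B \<union> C)]]_(G_B,w_B).
   S meets C in at most one vertex c, and the best A-side part of S is then worth
   \<alpha>_(A \<union> {c}) = \<alpha>_A + w_B(c); this gives \<alpha>(G,w) \<le> \<alpha>_A + \<alpha>(G_B,w_B).  Conversely, optimal
   sets of both sides agreeing on C glue to a stable set of G; if the optimum over A \<union> {c}
   avoids c, then w_B(c) = 0 and c can be removed from the B side first. *)

theory Submission
  imports Defs
begin

lemma verts_induced [simp]: "verts (induced G X) = X \<inter> verts G"
  by (simp add: induced_def verts_def)

lemma theta_induced [simp]: "theta (induced G X) = theta G"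
  by (simp add: induced_def theta_def fun_eq_iff)

lemma theta_commute: "theta G u v = theta G v u"
  by (simp add: theta_def insert_commute)

lemma stable_set_induced [simp]: "stable_set (induced G X) S \<longleftrightarrow> stable_set G S \<and> S \<subseteq> X"
  by (auto simp: stable_set_def)

lemma stable_set_empty [simp]: "stable_set G {}"
  by (simp add: stable_set_def)

lemma stable_set_subset: "stable_set G T \<Longrightarrow> S \<subseteq> T \<Longrightarrow> stable_set G S"
  by (auto simp: stable_set_def)

lemma finite_stable_sets: "finite (verts G) \<Longrightarrow> finite {S. stable_set G S \<and> P S}"
  by (rule finite_subset[of _ "Pow (verts G)"]) (auto simp: stable_set_def)

lemma stable_set_Int_strong_clique:
  assumes "stable_set G S" "strong_clique G C"
  shows "S \<inter> C = {} \<or> (\<exists>c\<in>C. S \<inter> C = {c})"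
proof -
  have "c = d" if "c \<in> S \<inter> C" "d \<in> S \<inter> C" for c d
    using assms that unfolding stable_set_def strong_clique_def by force
  then show ?thesis by blast
qed

lemma stable_set_Un_cut_partition:
  assumes "cut_partition G A B C" "stable_set G T" "T \<subseteq> A \<union> C" "stable_set G U" "U \<subseteq> B \<union> C"
    "T \<inter> C = U \<inter> C"
  shows "stable_set G (T \<union> U)"
  unfolding stable_set_def
proof (intro conjI ballI impI)
  show "T \<union> U \<subseteq> verts G"
    using assms(2,4) by (auto simp: stable_set_def)
next
  fix x y assume xy: "x \<in> T \<union> U" "y \<in> T \<union> U" "x \<noteq> y"
  have AB: "theta G a b = -1" if "a \<in> A" "b \<in> B" for a b
    using assms(1) that by (simp add: cut_partition_def)
  consider "x \<in> T" "y \<in> T" | "x \<in> U" "y \<in> U" | "x \<in> A" "y \<in> B" | "x \<in> B" "y \<in> A"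
    using xy assms(3,5,6) by blast
  then show "theta G x y \<le> 0"
  proof cases
    case 1 then show ?thesis using assms(2) xy(3) by (simp add: stable_set_def)
  next
    case 2 then show ?thesis using assms(4) xy(3) by (simp add: stable_set_def)
  next
    case 3 then show ?thesis using AB by simp
  next
    case 4 then show ?thesis using AB theta_commute[of G x y] by simp
  qed
qed

lemma weight_function_induced: "weight_function G w \<Longrightarrow> weight_function (induced G X) w"
  by (simp add: weight_function_def)

lemma weight_function_cong:
  assumes "weight_function G w" "\<And>u v. w' (Ord u v) = w (Ord u v)" "\<And>p. w' (Unord p) = w (Unord p)"
  shows "weight_function G w'"
  using assms by (simp add: weight_function_def)

lemma weight_function_Ord_le:
  "weight_function G w \<Longrightarrow> u \<in> verts G \<Longrightarrow> v \<in> verts G \<Longrightarrow> u \<noteq> v \<Longrightarrow> w (Ord u v) \<le> w (Unord {u, v})"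
  by (simp add: weight_function_def)

lemma weight_function_not_semiadjacent:
  "weight_function G w \<Longrightarrow> u \<in> verts G \<Longrightarrow> v \<in> verts G \<Longrightarrow> u \<noteq> v \<Longrightarrow> theta G u v \<noteq> 0
    \<Longrightarrow> w (Ord u v) = 0 \<and> w (Ord v u) = 0 \<and> w (Unord {u, v}) = 0"
  by (simp add: weight_function_def)

lemma cut_partition_weights_zero:
  assumes "cut_partition G A B C" "weight_function G w" "a \<in> A" "b \<in> B"
  shows "w (Ord a b) = 0 \<and> w (Ord b a) = 0 \<and> w (Unord {a, b}) = 0"
proof -
  have "a \<in> verts G" "b \<in> verts G" "a \<noteq> b" "theta G a b = -1"
    using assms(1,3,4) unfolding cut_partition_def by blast+
  then show ?thesis
    using weight_function_not_semiadjacent[OF assms(2)] by simp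
qed

lemma finite_pairs2: "finite X \<Longrightarrow> finite (pairs2 X)"
  by (rule finite_subset[of _ "Pow X"]) (auto simp: pairs2_def)

lemma pairs2_singleton [simp]: "pairs2 {u} = {}"
  by (auto simp: pairs2_def dest!: subset_singletonD)

lemma pairs2_mono: "X \<subseteq> Y \<Longrightarrow> pairs2 X \<subseteq> pairs2 Y"
  by (auto simp: pairs2_def)

lemma pairs2_Int: "pairs2 X \<inter> pairs2 Y = pairs2 (X \<inter> Y)"
  by (auto simp: pairs2_def)

lemma pairs2_Un_disjoint:
  assumes "X \<inter> Y = {}"
  shows "pairs2 (X \<union> Y) = pairs2 X \<union> pairs2 Y \<union> (\<lambda>(x, y). {x, y}) ` (X \<times> Y)"
proof
  show "pairs2 (X \<union> Y) \<subseteq> pairs2 X \<union> pairs2 Y \<union> (\<lambda>(x, y). {x, y}) ` (X \<times> Y)"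
  proof
    fix p assume "p \<in> pairs2 (X \<union> Y)"
    then obtain a b where p: "p = {a, b}" "a \<noteq> b" "a \<in> X \<union> Y" "b \<in> X \<union> Y"
      by (auto simp: pairs2_def card_2_iff)
    then have "p \<in> pairs2 X \<or> p \<in> pairs2 Y \<or> (a, b) \<in> X \<times> Y \<or> (b, a) \<in> X \<times> Y"
      by (auto simp: pairs2_def)
    then show "p \<in> pairs2 X \<union> pairs2 Y \<union> (\<lambda>(x, y). {x, y}) ` (X \<times> Y)"
      using p(1) by (auto simp: insert_commute intro: rev_image_eqI)
  qed
qed (use assms in \<open>auto simp: pairs2_def card_insert_if\<close>)

lemma sum_pairs2_Un_disjoint:
  assumes "finite X" "finite Y" "X \<inter> Y = {}"
  shows "(\<Sum>p\<in>pairs2 (X \<union> Y). f p)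
           = (\<Sum>p\<in>pairs2 X. f p) + (\<Sum>p\<in>pairs2 Y. f p) + (\<Sum>x\<in>X. \<Sum>y\<in>Y. f {x, y})"
proof -
  have "inj_on (\<lambda>(x, y). {x, y}) (X \<times> Y)"
    using assms(3) by (auto simp: inj_on_def doubleton_eq_iff)
  moreover have "pairs2 X \<inter> pairs2 Y = {}"
    using assms(3) by (auto simp: pairs2_def card_2_iff)
  moreover have "(pairs2 X \<union> pairs2 Y) \<inter> (\<lambda>(x, y). {x, y}) ` (X \<times> Y) = {}"
    using assms(3) by (auto simp: pairs2_def)
  ultimately show ?thesis
    using assms by (simp add: pairs2_Un_disjoint sum.union_disjoint finite_pairs2 sum.reindex
        sum.cartesian_product split_def)
qed

lemma sum_pairs2_insert:
  assumes "finite X" "u \<notin> X"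
  shows "(\<Sum>p\<in>pairs2 (insert u X). f p) = (\<Sum>p\<in>pairs2 X. f p) + (\<Sum>x\<in>X. f {u, x})"
  using assms sum_pairs2_Un_disjoint[of X "{u}" f] by (simp add: insert_commute)

lemma sum_Un_Int_of_support:
  assumes "finite Z" "P \<subseteq> Z" "Q \<subseteq> Z" "\<And>z. z \<in> Z \<Longrightarrow> z \<notin> P \<Longrightarrow> z \<notin> Q \<Longrightarrow> f z = 0"
  shows "sum f Z + sum f (P \<inter> Q) = sum f P + sum f Q"
proof -
  have "sum f (P \<union> Q) = sum f Z"
    using assms by (intro sum.mono_neutral_left) auto
  moreover have "finite P" "finite Q"
    using assms(1-3) by (auto intro: finite_subset)
  ultimately show ?thesis
    by (metis sum.union_inter)
qed

lemma set_weight_remove_vertex: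
  assumes "finite (verts G)" "T \<subseteq> verts G" "u \<in> T"
  shows "set_weight G w T + (\<Sum>v\<in>verts G - T. w (Unord {u, v}))
           \<le> set_weight G w (T - {u}) + w (Vtx u) + (\<Sum>v\<in>verts G - T. w (Ord u v))"
proof -
  let ?V = "verts G"
  have T: "finite T" using assms(1,2) by (rule finite_subset[rotated])
  have "(\<Sum>x\<in>T - {u}. \<Sum>v\<in>?V - T. w (Ord x v)) \<le> (\<Sum>x\<in>T - {u}. \<Sum>v\<in>?V - (T - {u}). w (Ord x v))"
    using assms(1) by (intro sum_mono sum_mono2) auto
  moreover have "?V - (T - {u}) = insert u (?V - T)"
    using assms by auto
  ultimately show ?thesis
    using assms T by (simp add: set_weight_def sum.remove sum_pairs2_insert)
qed

lemma set_weight_remove_vertex_le: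
  assumes "weight_function G w" "finite (verts G)" "T \<subseteq> verts G" "u \<in> T"
  shows "set_weight G w T \<le> set_weight G w (T - {u}) + w (Vtx u)"
proof -
  have "(\<Sum>v\<in>verts G - T. w (Ord u v)) \<le> (\<Sum>v\<in>verts G - T. w (Unord {u, v}))"
    using assms(3,4) by (intro sum_mono weight_function_Ord_le[OF assms(1)]) auto
  then show ?thesis
    using set_weight_remove_vertex[OF assms(2-4), of w] by linarith
qed

lemma set_weight_strong_clique:
  assumes "weight_function G w" "strong_clique G C" "T \<subseteq> C"
  shows "set_weight (induced G C) w T = (\<Sum>u\<in>T. w (Vtx u))"
proof -
  have C: "C \<inter> verts G = C" and adj: "\<And>u v. u \<in> C \<Longrightarrow> v \<in> C \<Longrightarrow> u \<noteq> v \<Longrightarrow> theta G u v = 1"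
    using assms(2) by (auto simp: strong_clique_def)
  have zero: "w (Ord u v) = 0" "w (Unord {u, v}) = 0" if "u \<in> C" "v \<in> C" "u \<noteq> v" for u v
  proof -
    have "u \<in> verts G" "v \<in> verts G" using that C by blast+
    then show "w (Ord u v) = 0" "w (Unord {u, v}) = 0"
      using weight_function_not_semiadjacent[OF assms(1)] adj[OF that] that(3) by simp_all
  qed
  have "(\<Sum>u\<in>T. \<Sum>v\<in>C - T. w (Ord u v)) = 0"
    using assms(3) zero(1) by (intro sum.neutral ballI) auto
  moreover have "(\<Sum>p\<in>pairs2 (C - T). w (Unord p)) = 0"
    using zero(2) by (intro sum.neutral ballI) (auto simp: pairs2_def card_2_iff)
  ultimately show ?thesis
    using C by (simp add: set_weight_def)
qed

lemma set_weight_update_vertex_weights: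
  assumes "finite S" "\<And>u. u \<in> S - C \<Longrightarrow> w' (Vtx u) = w (Vtx u)"
    "\<And>u v. w' (Ord u v) = w (Ord u v)" "\<And>p. w' (Unord p) = w (Unord p)"
  shows "set_weight G w' S + (\<Sum>u\<in>S \<inter> C. w (Vtx u)) = set_weight G w S + (\<Sum>u\<in>S \<inter> C. w' (Vtx u))"
proof -
  have split: "(\<Sum>u\<in>S. f u) = (\<Sum>u\<in>S - C. f u) + (\<Sum>u\<in>S \<inter> C. f u)" for f :: "'a \<Rightarrow> nat"
    using assms(1) by (simp add: sum.Int_Diff[of S f C])
  have "(\<Sum>u\<in>S - C. w' (Vtx u)) = (\<Sum>u\<in>S - C. w (Vtx u))"
    using assms(2) by simp
  then show ?thesis
    using split[of "\<lambda>u. w (Vtx u)"] split[of "\<lambda>u. w' (Vtx u)"] by (simp add: set_weight_def assms(3,4))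
qed

lemma sum_ordered_pairs_split:
  assumes "finite V" "V = X \<union> Y" "S \<subseteq> V"
    and "\<And>x y. x \<in> V \<Longrightarrow> y \<in> V \<Longrightarrow> \<not> (x \<in> X \<and> y \<in> X) \<Longrightarrow> \<not> (x \<in> Y \<and> y \<in> Y) \<Longrightarrow> f x y = 0"
  shows "(\<Sum>u\<in>S. \<Sum>v\<in>V - S. f u v) + (\<Sum>u\<in>S \<inter> (X \<inter> Y). \<Sum>v\<in>X \<inter> Y - S. f u v)
           = (\<Sum>u\<in>S \<inter> X. \<Sum>v\<in>X - S. f u v) + (\<Sum>u\<in>S \<inter> Y. \<Sum>v\<in>Y - S. f u v)"
proof -
  let ?f = "\<lambda>(u, v). f u v"
  have "(S \<inter> X) \<times> (X - S) \<inter> (S \<inter> Y) \<times> (Y - S) = (S \<inter> (X \<inter> Y)) \<times> (X \<inter> Y - S)"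
    by blast
  moreover have "sum ?f (S \<times> (V - S)) + sum ?f ((S \<inter> X) \<times> (X - S) \<inter> (S \<inter> Y) \<times> (Y - S))
      = sum ?f ((S \<inter> X) \<times> (X - S)) + sum ?f ((S \<inter> Y) \<times> (Y - S))"
  proof (rule sum_Un_Int_of_support)
    show "finite (S \<times> (V - S))"
      using assms(1) finite_subset[OF assms(3,1)] by simp
    show "(S \<inter> X) \<times> (X - S) \<subseteq> S \<times> (V - S)" "(S \<inter> Y) \<times> (Y - S) \<subseteq> S \<times> (V - S)"
      using assms(2) by blast+
  next
    fix z assume z: "z \<in> S \<times> (V - S)" "z \<notin> (S \<inter> X) \<times> (X - S)" "z \<notin> (S \<inter> Y) \<times> (Y - S)"
    obtain x y where "z = (x, y)" by fastforce
    with z assms(3) show "?f z = 0" by (auto intro: assms(4))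
  qed
  ultimately show ?thesis by (simp add: sum.cartesian_product)
qed

lemma sum_pairs2_split:
  assumes "finite V" "V = X \<union> Y"
    and "\<And>x y. x \<in> V \<Longrightarrow> y \<in> V \<Longrightarrow> \<not> (x \<in> X \<and> y \<in> X) \<Longrightarrow> \<not> (x \<in> Y \<and> y \<in> Y) \<Longrightarrow> f {x, y} = 0"
  shows "(\<Sum>p\<in>pairs2 (V - S). f p) + (\<Sum>p\<in>pairs2 (X \<inter> Y - S). f p)
           = (\<Sum>p\<in>pairs2 (X - S). f p) + (\<Sum>p\<in>pairs2 (Y - S). f p)"
proof -
  have "pairs2 (X - S) \<inter> pairs2 (Y - S) = pairs2 (X \<inter> Y - S)"
    unfolding pairs2_Int by (rule arg_cong[of _ _ pairs2]) blast
  moreover have "(\<Sum>p\<in>pairs2 (V - S). f p) + (\<Sum>p\<in>pairs2 (X - S) \<inter> pairs2 (Y - S). f p)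
      = (\<Sum>p\<in>pairs2 (X - S). f p) + (\<Sum>p\<in>pairs2 (Y - S). f p)"
  proof (rule sum_Un_Int_of_support)
    show "finite (pairs2 (V - S))"
      using assms(1) by (simp add: finite_pairs2)
    show "pairs2 (X - S) \<subseteq> pairs2 (V - S)" "pairs2 (Y - S) \<subseteq> pairs2 (V - S)"
      using assms(2) by (intro pairs2_mono; blast)+
  next
    fix p assume p: "p \<in> pairs2 (V - S)" "p \<notin> pairs2 (X - S)" "p \<notin> pairs2 (Y - S)"
    then obtain x y where xy: "p = {x, y}" "x \<noteq> y" "x \<in> V - S" "y \<in> V - S"
      by (auto simp: pairs2_def card_2_iff)
    with p(2,3) have "\<not> (x \<in> X \<and> y \<in> X)" "\<not> (x \<in> Y \<and> y \<in> Y)"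
      by (auto simp: pairs2_def)
    with xy show "f p = 0" by (auto intro: assms(3))
  qed
  ultimately show ?thesis by simp
qed

lemma set_weight_split:
  assumes "finite (verts G)" "verts G = X \<union> Y" "S \<subseteq> verts G"
    and separated: "\<And>x y. x \<in> X - Y \<Longrightarrow> y \<in> Y - X \<Longrightarrow> w (Ord x y) = 0 \<and> w (Ord y x) = 0 \<and> w (Unord {x, y}) = 0"
  shows "set_weight G w S + set_weight (induced G (X \<inter> Y)) w (S \<inter> (X \<inter> Y))
           = set_weight (induced G X) w (S \<inter> X) + set_weight (induced G Y) w (S \<inter> Y)"
proof -
  let ?V = "verts G"
  have cross: "w (Ord x y) = 0" "w (Unord {x, y}) = 0"
    if "x \<in> ?V" "y \<in> ?V" "\<not> (x \<in> X \<and> y \<in> X)" "\<not> (x \<in> Y \<and> y \<in> Y)" for x y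
  proof -
    have "(x \<in> X - Y \<and> y \<in> Y - X) \<or> (x \<in> Y - X \<and> y \<in> X - Y)"
      using that assms(2) by blast
    then show "w (Ord x y) = 0" "w (Unord {x, y}) = 0"
      using separated[of x y] separated[of y x] by (auto simp: insert_commute)
  qed
  have "S \<inter> X \<inter> (S \<inter> Y) = S \<inter> (X \<inter> Y)" by blast
  moreover have "(\<Sum>u\<in>S. w (Vtx u)) + (\<Sum>u\<in>S \<inter> X \<inter> (S \<inter> Y). w (Vtx u))
      = (\<Sum>u\<in>S \<inter> X. w (Vtx u)) + (\<Sum>u\<in>S \<inter> Y. w (Vtx u))"
    using finite_subset[OF assms(3,1)] assms(2,3) by (intro sum_Un_Int_of_support) auto
  moreover note sum_ordered_pairs_split[OF assms(1-3), of "\<lambda>u v. w (Ord u v)"]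
    sum_pairs2_split[OF assms(1,2), of "\<lambda>p. w (Unord p)" S]
  moreover have "X \<inter> ?V = X" "Y \<inter> ?V = Y" "X \<inter> Y \<inter> ?V = X \<inter> Y"
    "X - S \<inter> X = X - S" "Y - S \<inter> Y = Y - S" "X \<inter> Y - S \<inter> (X \<inter> Y) = X \<inter> Y - S"
    using assms(2) by auto
  ultimately show ?thesis
    using cross by (simp add: set_weight_def)
qed

definition alpha_in :: "'a trigraph \<Rightarrow> ('a delem \<Rightarrow> nat) \<Rightarrow> 'a set \<Rightarrow> nat" where
  "alpha_in G w R = Max (set_weight G w ` {S. stable_set G S \<and> S \<subseteq> R})"

lemma alpha_eq_alpha_in: "alpha G w = alpha_in G w (verts G)"
  unfolding alpha_def alpha_in_def by (metis stable_set_def)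

lemma alpha_in_ge:
  "finite (verts G) \<Longrightarrow> stable_set G S \<Longrightarrow> S \<subseteq> R \<Longrightarrow> set_weight G w S \<le> alpha_in G w R"
  unfolding alpha_in_def by (simp add: finite_stable_sets)

lemma alpha_in_attained:
  assumes "finite (verts G)"
  obtains S where "stable_set G S" "S \<subseteq> R" "alpha_in G w R = set_weight G w S"
proof -
  have "alpha_in G w R \<in> set_weight G w ` {S. stable_set G S \<and> S \<subseteq> R}"
    unfolding alpha_in_def using assms by (intro Max_in) (auto simp: finite_stable_sets intro!: exI[of _ "{}"])
  then show ?thesis using that by blast
qed

lemma alpha_in_mono: "finite (verts G) \<Longrightarrow> R \<subseteq> R' \<Longrightarrow> alpha_in G w R \<le> alpha_in G w R'"
  by (metis alpha_in_attained alpha_in_ge order_trans)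

definition red_penalty :: "'a trigraph \<Rightarrow> ('a delem \<Rightarrow> nat) \<Rightarrow> 'a set \<Rightarrow> 'a \<Rightarrow> int" where
  "red_penalty G w R u = (\<Sum>v\<in>verts G - R. int (w (Unord {u, v})) - int (w (Ord u v)))"

lemma red_weight_Vtx:
  "red_weight G w R (Vtx u) = nat (max (int (w (Vtx u)) - red_penalty G w R u) 0)"
  by (simp add: red_weight_def red_penalty_def)

lemma set_weight_Red:
  assumes "finite (verts H)" "R \<subseteq> verts H" "T \<subseteq> R"
  shows "int (set_weight (induced H R) (red_weight H w R) T) + int (Ext H w R)
           = int (set_weight H w T) + (\<Sum>u\<in>T. max 0 (red_penalty H w R u - int (w (Vtx u))))"
proof -
  define D where "D = verts H - R"
  have fin: "finite R" "finite D" "finite T"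
    using assms finite_subset[OF assms(2)] finite_subset[OF assms(3)] by (auto simp: D_def)
  have VT: "verts H - T = (R - T) \<union> D" "(R - T) \<inter> D = {}"
    using assms unfolding D_def by auto
  have vertex: "int (red_weight H w R (Vtx u))
      = int (w (Vtx u)) - red_penalty H w R u + max 0 (red_penalty H w R u - int (w (Vtx u)))" for u
    by (simp add: red_weight_Vtx)
  have penalty: "red_penalty H w R u = int (\<Sum>v\<in>D. w (Unord {u, v})) - int (\<Sum>v\<in>D. w (Ord u v))" for u
    by (simp add: red_penalty_def D_def sum_subtractf)
  have ord: "(\<Sum>u\<in>T. \<Sum>v\<in>verts H - T. w (Ord u v))
      = (\<Sum>u\<in>T. \<Sum>v\<in>R - T. w (Ord u v)) + (\<Sum>u\<in>T. \<Sum>v\<in>D. w (Ord u v))"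
    unfolding VT using fin VT(2) by (simp add: sum.union_disjoint sum.distrib)
  have unord: "(\<Sum>p\<in>pairs2 (verts H - T). w (Unord p)) = (\<Sum>p\<in>pairs2 (R - T). w (Unord p))
      + (\<Sum>p\<in>pairs2 D. w (Unord p)) + (\<Sum>u\<in>R - T. \<Sum>v\<in>D. w (Unord {u, v}))"
    unfolding VT using fin VT(2) by (simp add: sum_pairs2_Un_disjoint)
  have cross: "(\<Sum>u\<in>R. \<Sum>v\<in>D. w (Unord {u, v}))
      = (\<Sum>u\<in>R - T. \<Sum>v\<in>D. w (Unord {u, v})) + (\<Sum>u\<in>T. \<Sum>v\<in>D. w (Unord {u, v}))"
    using fin assms(3) by (simp add: sum.subset_diff)
  have "R \<inter> verts H = R" using assms(2) by blast
  then have swR: "int (set_weight (induced H R) (red_weight H w R) T) = int (\<Sum>u\<in>T. red_weight H w R (Vtx u))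
      + int (\<Sum>u\<in>T. \<Sum>v\<in>R - T. w (Ord u v)) + int (\<Sum>p\<in>pairs2 (R - T). w (Unord p))"
    by (simp add: set_weight_def red_weight_def)
  have swH: "int (set_weight H w T) = int (\<Sum>u\<in>T. w (Vtx u))
      + int (\<Sum>u\<in>T. \<Sum>v\<in>verts H - T. w (Ord u v)) + int (\<Sum>p\<in>pairs2 (verts H - T). w (Unord p))"
    by (simp add: set_weight_def)
  have ext: "int (Ext H w R) = int (\<Sum>p\<in>pairs2 D. w (Unord p)) + int (\<Sum>u\<in>R. \<Sum>v\<in>D. w (Unord {u, v}))"
    by (simp add: Ext_def D_def)
  have vertices: "int (\<Sum>u\<in>T. red_weight H w R (Vtx u)) = int (\<Sum>u\<in>T. w (Vtx u))
      - int (\<Sum>u\<in>T. \<Sum>v\<in>D. w (Unord {u, v})) + int (\<Sum>u\<in>T. \<Sum>v\<in>D. w (Ord u v))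
      + (\<Sum>u\<in>T. max 0 (red_penalty H w R u - int (w (Vtx u))))"
    unfolding of_nat_sum vertex penalty by (simp add: sum.distrib sum_subtractf)
  show ?thesis
    using swR swH ext vertices arg_cong[OF ord, of int] arg_cong[OF unord, of int] arg_cong[OF cross, of int]
    by simp
qed

lemma red_penalty_le:
  assumes "weight_function H w" "finite (verts H)" "R \<subseteq> verts H" "T \<subseteq> R" "u \<in> T"
  shows "red_penalty H w R u \<le> (\<Sum>v\<in>verts H - T. int (w (Unord {u, v})) - int (w (Ord u v)))"
  unfolding red_penalty_def
proof (rule sum_mono2)
  show "0 \<le> int (w (Unord {u, v})) - int (w (Ord u v))" if "v \<in> verts H - T - (verts H - R)" for v
    using assms(3-5) that weight_function_Ord_le[OF assms(1), of u v] by auto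
qed (use assms in auto)

lemma set_weight_Red_le_alpha_in:
  assumes "weight_function H w" "finite (verts H)" "R \<subseteq> verts H" "stable_set H T" "T \<subseteq> R"
  shows "int (set_weight (induced H R) (red_weight H w R) T) + int (Ext H w R) \<le> int (alpha_in H w R)"
proof -
  have "finite T"
    using assms(3,5) by (blast intro: finite_subset[OF _ assms(2)])
  then show ?thesis
    using assms(4,5)
  proof (induction T rule: finite_psubset_induct)
    case (psubset T)
    define excess where "excess u = max 0 (red_penalty H w R u - int (w (Vtx u)))" for u
    have reduced: "int (set_weight (induced H R) (red_weight H w R) S) + int (Ext H w R)
        = int (set_weight H w S) + (\<Sum>u\<in>S. excess u)" if "S \<subseteq> T" for S
      unfolding excess_def using assms(2,3) psubset.prems(2) that by (intro set_weight_Red) auto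
    show ?case
    proof (cases "\<exists>u\<in>T. int (w (Vtx u)) < red_penalty H w R u")
      case False
      then have "(\<Sum>u\<in>T. excess u) = 0"
        by (intro sum.neutral) (auto simp: excess_def)
      then show ?thesis
        using reduced[of T] alpha_in_ge[OF assms(2) psubset.prems] by simp
    next
      case True
      then obtain u where u: "u \<in> T" "int (w (Vtx u)) < red_penalty H w R u" by blast
      have "T \<subseteq> verts H" using psubset.prems assms(3) by blast
      from set_weight_remove_vertex[OF assms(2) this u(1), of w]
      have "int (set_weight H w T) + (\<Sum>v\<in>verts H - T. int (w (Unord {u, v})) - int (w (Ord u v)))
          \<le> int (set_weight H w (T - {u})) + int (w (Vtx u))"
        by (simp add: sum_subtractf flip: of_nat_sum)
      then have "int (set_weight H w T) + excess u \<le> int (set_weight H w (T - {u}))"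
        using red_penalty_le[OF assms(1-3) psubset.prems(2) u(1)] u(2) by (simp add: excess_def)
      moreover have "(\<Sum>x\<in>T. excess x) = excess u + (\<Sum>x\<in>T - {u}. excess x)"
        using psubset.hyps u(1) by (simp add: sum.remove)
      moreover have "int (set_weight (induced H R) (red_weight H w R) (T - {u})) + int (Ext H w R)
          \<le> int (alpha_in H w R)"
        using psubset.IH[of "T - {u}"] psubset.prems u(1) stable_set_subset by blast
      ultimately show ?thesis
        using reduced[of T] reduced[of "T - {u}"] by simp
    qed
  qed
qed

lemma alpha_Red_plus_Ext:
  assumes "weight_function H w" "finite (verts H)" "R \<subseteq> verts H"
  shows "alpha_wt (Red H w R) + Ext H w R = alpha_in H w R"
proof -
  let ?HR = "induced H R" and ?w' = "red_weight H w R"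
  have fin: "finite (verts ?HR)" using assms(2) by simp
  have red: "alpha_wt (Red H w R) = alpha_in ?HR ?w' (verts ?HR)"
    by (simp add: alpha_wt_def Red_def alpha_eq_alpha_in)
  show ?thesis
  proof (rule antisym)
    obtain T where T: "stable_set ?HR T" "alpha_in ?HR ?w' (verts ?HR) = set_weight ?HR ?w' T"
      using alpha_in_attained[OF fin] by metis
    then show "alpha_wt (Red H w R) + Ext H w R \<le> alpha_in H w R"
      using set_weight_Red_le_alpha_in[OF assms, of T] red by simp
  next
    obtain S where S: "stable_set H S" "S \<subseteq> R" "alpha_in H w R = set_weight H w S"
      using alpha_in_attained[OF assms(2)] by metis
    have "int (set_weight H w S) \<le> int (set_weight ?HR ?w' S) + int (Ext H w R)"
      using set_weight_Red[OF assms(2,3) S(2), of w] by (simp add: sum_nonneg)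
    moreover have "set_weight ?HR ?w' S \<le> alpha_in ?HR ?w' (verts ?HR)"
      using S assms(3) by (intro alpha_in_ge[OF fin]) auto
    ultimately show "alpha_in H w R \<le> alpha_wt (Red H w R) + Ext H w R"
      using S(3) red by linarith
  qed
qed

locale clique_cutset_weights =
  fixes G :: "'a trigraph" and w wB :: "'a delem \<Rightarrow> nat" and A B C :: "'a set"
  assumes finite_verts: "finite (verts G)"
    and weight_function: "weight_function G w"
    and strong_clique: "strong_clique G C"
    and cut_partition: "cut_partition G A B C"
    and wB_clique: "\<And>c. c \<in> C \<Longrightarrow>
      wB (Vtx c) = alpha_in (induced G (A \<union> C)) w (A \<union> {c}) - alpha_in (induced G (A \<union> C)) w A"
    and wB_Vtx: "\<And>u. u \<notin> C \<Longrightarrow> wB (Vtx u) = w (Vtx u)"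
    and wB_Ord: "\<And>u v. wB (Ord u v) = w (Ord u v)"
    and wB_Unord: "\<And>p. wB (Unord p) = w (Unord p)"
begin

abbreviation GA :: "'a trigraph" where "GA \<equiv> induced G (A \<union> C)"
abbreviation GB :: "'a trigraph" where "GB \<equiv> induced G (B \<union> C)"

lemma partition: "verts G = A \<union> B \<union> C" "A \<inter> B = {}" "A \<inter> C = {}" "B \<inter> C = {}"
  using cut_partition by (auto simp: cut_partition_def)

lemma finite_verts_induced: "finite (verts (induced G X))"
  using finite_verts by simp

lemma weight_function_GB: "weight_function GB wB"
  using weight_function_cong[OF weight_function_induced[OF weight_function] wB_Ord wB_Unord] .

lemma alpha_in_GA_insert:
  assumes "c \<in> C"
  shows "alpha_in GA w (A \<union> {c}) = alpha_in GA w A + wB (Vtx c)"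
proof -
  have "alpha_in GA w A \<le> alpha_in GA w (A \<union> {c})"
    by (rule alpha_in_mono[OF finite_verts_induced]) auto
  then show ?thesis using wB_clique[OF assms] by simp
qed

lemma alpha_in_GA_stable:
  assumes "stable_set G S"
  shows "alpha_in GA w (A \<union> (S \<inter> C)) = alpha_in GA w A + (\<Sum>c\<in>S \<inter> C. wB (Vtx c))"
  using stable_set_Int_strong_clique[OF assms strong_clique] alpha_in_GA_insert by auto

lemma set_weight_split_wB:
  assumes "S \<subseteq> verts G"
  shows "set_weight G w S + (\<Sum>c\<in>S \<inter> C. wB (Vtx c))
           = set_weight GA w (S \<inter> (A \<union> C)) + set_weight GB wB (S \<inter> (B \<union> C))"
proof -
  have "verts G = (A \<union> C) \<union> (B \<union> C)" "(A \<union> C) \<inter> (B \<union> C) = C" "(A \<union> C) - (B \<union> C) = A"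
    "(B \<union> C) - (A \<union> C) = B"
    using partition by blast+
  then have "set_weight G w S + set_weight (induced G C) w (S \<inter> C)
      = set_weight GA w (S \<inter> (A \<union> C)) + set_weight GB w (S \<inter> (B \<union> C))"
    using set_weight_split[OF finite_verts _ assms, of "A \<union> C" "B \<union> C" w]
      cut_partition_weights_zero[OF cut_partition weight_function] by simp
  moreover have "set_weight (induced G C) w (S \<inter> C) = (\<Sum>c\<in>S \<inter> C. w (Vtx c))"
    using set_weight_strong_clique[OF weight_function strong_clique] by simp
  moreover have "S \<inter> (B \<union> C) \<inter> C = S \<inter> C" by blast
  moreover have "finite (S \<inter> (B \<union> C))"
    using finite_subset[OF assms finite_verts] by simp
  then have "set_weight GB wB (S \<inter> (B \<union> C)) + (\<Sum>c\<in>S \<inter> (B \<union> C) \<inter> C. w (Vtx c))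
      = set_weight GB w (S \<inter> (B \<union> C)) + (\<Sum>c\<in>S \<inter> (B \<union> C) \<inter> C. wB (Vtx c))"
    using wB_Vtx wB_Ord wB_Unord by (intro set_weight_update_vertex_weights) auto
  ultimately show ?thesis by simp
qed

lemma set_weight_glue:
  assumes "stable_set G T" "T \<subseteq> A \<union> C" "stable_set G U" "U \<subseteq> B \<union> C" "T \<inter> C = U \<inter> C"
  shows "stable_set G (T \<union> U)"
    and "set_weight G w (T \<union> U) + (\<Sum>c\<in>T \<inter> C. wB (Vtx c)) = set_weight GA w T + set_weight GB wB U"
proof -
  show stable: "stable_set G (T \<union> U)"
    using stable_set_Un_cut_partition[OF cut_partition assms] .
  have "(T \<union> U) \<inter> (A \<union> C) = T" "(T \<union> U) \<inter> (B \<union> C) = U" "(T \<union> U) \<inter> C = T \<inter> C"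
    using assms(2,4,5) partition by blast+
  then show "set_weight G w (T \<union> U) + (\<Sum>c\<in>T \<inter> C. wB (Vtx c)) = set_weight GA w T + set_weight GB wB U"
    using set_weight_split_wB[of "T \<union> U"] stable by (simp add: stable_set_def)
qed

lemma alpha_GB_attained:
  obtains U where "stable_set G U" "U \<subseteq> B \<union> C" "alpha GB wB = set_weight GB wB U"
proof -
  obtain U where "stable_set GB U" "alpha GB wB = set_weight GB wB U"
    using alpha_in_attained[OF finite_verts_induced] unfolding alpha_eq_alpha_in by metis
  then show ?thesis by (auto intro: that)
qed

lemma alpha_in_GA_attained:
  obtains T where "stable_set G T" "T \<subseteq> R" "alpha_in GA w R = set_weight GA w T"
proof -
  obtain T where "stable_set GA T" "T \<subseteq> R" "alpha_in GA w R = set_weight GA w T"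
    using alpha_in_attained[OF finite_verts_induced] .
  then show ?thesis by (auto intro: that)
qed

lemma alpha_le: "alpha G w \<le> alpha_in GA w A + alpha GB wB"
proof -
  obtain S where S: "stable_set G S" "alpha G w = set_weight G w S"
    using alpha_in_attained[OF finite_verts] unfolding alpha_eq_alpha_in by metis
  have "set_weight GA w (S \<inter> (A \<union> C)) \<le> alpha_in GA w (A \<union> (S \<inter> C))"
    using S(1) by (intro alpha_in_ge[OF finite_verts_induced]) (auto intro: stable_set_subset)
  moreover have "set_weight GB wB (S \<inter> (B \<union> C)) \<le> alpha GB wB"
    unfolding alpha_eq_alpha_in using S(1)
    by (intro alpha_in_ge[OF finite_verts_induced]) (auto intro: stable_set_subset simp: stable_set_def)
  moreover have "S \<subseteq> verts G"
    using S(1) by (simp add: stable_set_def)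
  note set_weight_split_wB[OF this]
  ultimately show ?thesis
    using S(2) alpha_in_GA_stable[OF S(1)] by linarith
qed

lemma glue_optimal_A_side:
  assumes "stable_set G U" "U \<subseteq> B \<union> C" "stable_set G T" "T \<subseteq> A \<union> (U \<inter> C)" "U \<inter> C \<subseteq> T"
    "alpha_in GA w (A \<union> (U \<inter> C)) = set_weight GA w T"
  shows "stable_set G (T \<union> U)" "alpha_in GA w A + set_weight GB wB U = set_weight G w (T \<union> U)"
proof -
  have TC: "T \<subseteq> A \<union> C" "T \<inter> C = U \<inter> C"
    using assms(4,5) partition(3) by auto
  show "stable_set G (T \<union> U)"
    using set_weight_glue(1)[OF assms(3) TC(1) assms(1,2) TC(2)] .
  show "alpha_in GA w A + set_weight GB wB U = set_weight G w (T \<union> U)"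
    using set_weight_glue(2)[OF assms(3) TC(1) assms(1,2) TC(2)] TC(2) assms(6)
      alpha_in_GA_stable[OF assms(1)] by simp
qed

lemma stable_set_B_side_extends:
  assumes "stable_set G U" "U \<subseteq> B \<union> C"
  obtains S where "stable_set G S" "alpha_in GA w A + set_weight GB wB U \<le> set_weight G w S"
proof -
  obtain T where T: "stable_set G T" "T \<subseteq> A \<union> (U \<inter> C)" "alpha_in GA w (A \<union> (U \<inter> C)) = set_weight GA w T"
    using alpha_in_GA_attained .
  show ?thesis
  proof (cases "U \<inter> C \<subseteq> T")
    case True
    then show ?thesis
      using glue_optimal_A_side[OF assms T(1,2) True T(3)] that by simp
  next
    case False
    obtain c where c: "c \<in> C" "U \<inter> C = {c}"
      using stable_set_Int_strong_clique[OF assms(1) strong_clique] False by blast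
    with False have "c \<notin> T" by simp
    have "set_weight GA w T \<le> alpha_in GA w A"
      using T(1,2) c \<open>c \<notin> T\<close> by (intro alpha_in_ge[OF finite_verts_induced]) auto
    then have wc: "wB (Vtx c) = 0"
      using alpha_in_GA_insert[OF c(1)] T(3) c(2) by simp
    define U' where "U' = U - {c}"
    have U': "stable_set G U'" "U' \<subseteq> B \<union> C" "U' \<inter> C = {}"
      using stable_set_subset[OF assms(1)] assms(2) c(2) by (auto simp: U'_def)
    have "set_weight GB wB U \<le> set_weight GB wB U'"
      using set_weight_remove_vertex_le[OF weight_function_GB finite_verts_induced, of U c] assms c(2) wc
      by (auto simp: U'_def stable_set_def)
    moreover obtain T0 where "stable_set G T0" "T0 \<subseteq> A \<union> (U' \<inter> C)"
      "alpha_in GA w (A \<union> (U' \<inter> C)) = set_weight GA w T0"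
      using alpha_in_GA_attained .
    note glue_optimal_A_side[OF U'(1,2) this(1,2) _ this(3)]
    ultimately show ?thesis
      using U'(3) that by fastforce
  qed
qed

lemma alpha_ge: "alpha_in GA w A + alpha GB wB \<le> alpha G w"
proof -
  obtain U where U: "stable_set G U" "U \<subseteq> B \<union> C" "alpha GB wB = set_weight GB wB U"
    using alpha_GB_attained .
  obtain S where S: "stable_set G S" "alpha_in GA w A + set_weight GB wB U \<le> set_weight G w S"
    using stable_set_B_side_extends[OF U(1,2)] .
  have "set_weight G w S \<le> alpha G w"
    unfolding alpha_eq_alpha_in using S(1)
    by (intro alpha_in_ge[OF finite_verts]) (auto simp: stable_set_def)
  with S(2) U(3) show ?thesis by simp
qed

end

theorem lemma3p10:
  fixes G :: "'a trigraph" and w :: "'a delem \<Rightarrow> nat" and A B C :: "'a set"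
    and GA GB :: "'a trigraph" and alphaA :: "'a set \<Rightarrow> int" and wB :: "'a delem \<Rightarrow> nat"
  assumes "trigraph G"
    and "weight_function G w"
    and "clique_cutset G C"
    and "cut_partition G A B C"
    and "GA = induced G (A \<union> C)"
    and "GB = induced G (B \<union> C)"
    and "\<And>C'. C' \<subseteq> C \<Longrightarrow>
           alphaA C' = int (alpha_wt (Red GA w (A \<union> C'))) + int (Ext GA w (A \<union> C'))"
    and "\<And>p. wB p = (case p of
                         Vtx c \<Rightarrow> (if c \<in> C then nat (alphaA {c} - alphaA {}) else w p)
                       | _ \<Rightarrow> w p)"
  shows "(\<forall>c\<in>C. alphaA {c} - alphaA {} \<ge> 0) \<and> weight_function GB wB
         \<and> int (alpha G w) = alphaA {} + int (alpha GB wB)"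
proof -
  have fin: "finite (verts G)"
    using assms(1) by (simp add: trigraph_def)
  have alphaA: "alphaA C' = int (alpha_in GA w (A \<union> C'))" if "C' \<subseteq> C" for C'
  proof -
    have "alpha_wt (Red GA w (A \<union> C')) + Ext GA w (A \<union> C') = alpha_in GA w (A \<union> C')"
      using weight_function_induced[OF assms(2)] assms(4,5) fin that
      by (intro alpha_Red_plus_Ext) (auto simp: cut_partition_def)
    then show ?thesis
      using assms(7)[OF that] by (simp flip: of_nat_add)
  qed
  have mono: "alpha_in GA w A \<le> alpha_in GA w (A \<union> {c})" for c
    using fin assms(5) by (intro alpha_in_mono) auto
  have decomposition: "clique_cutset_weights G w wB A B C"
  proof
    show "strong_clique G C"
      using assms(3) by (simp add: clique_cutset_def)
    show "wB (Vtx c) = alpha_in (induced G (A \<union> C)) w (A \<union> {c}) - alpha_in (induced G (A \<union> C)) w A"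
      if "c \<in> C" for c
      using assms(8)[of "Vtx c"] alphaA[of "{c}"] alphaA[of "{}"] mono[of c] that assms(5) by simp
  qed (use fin assms(2,4,8) in auto)
  have "weight_function GB wB"
    using clique_cutset_weights.weight_function_GB[OF decomposition] assms(6) by simp
  moreover have "alpha G w = alpha_in GA w A + alpha GB wB"
    using clique_cutset_weights.alpha_le[OF decomposition]
      clique_cutset_weights.alpha_ge[OF decomposition] assms(5,6) by simp
  moreover have "\<forall>c\<in>C. alphaA {c} - alphaA {} \<ge> 0"
    using alphaA mono by simp
  ultimately show ?thesis
    using alphaA[of "{}"] by simp
qed

end
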